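(* Let $q$ be a prime power, $m\ge1$, $s\ge1$ and $0\le d<sq$. Let $S=\{\mathbf{j}\in\mathbb{N}^m: |\mathbf{j}|<s\}$ and for $\mathbf{j}\in S$ let $d_{\mathbf{j}}=\min(m(q-1),d-|\mathbf{j}|q)$. Fix an enumeration $\mathbb{F}_q=\{\alpha_0,\dots,\alpha_{q-1}\}$ and for an integer $e$ put $$\mathcal{I}_e=\{(\alpha_{i_1},\dots,\alpha_{i_m}) : 0\le i_l\le q-1 \ (1\le l\le m),\ \textstyle\sum_{l} i_l\le e\}\subset\mathbb{F}_q^m$$ (empty if $e<0$). Then $$\mathcal{I}=\{(\mathbf{j},\mathbf{P}) : \mathbf{j}\in S,\ \mathbf{P}\in\mathcal{I}_{d_{\mathbf{j}}}\}\subset S\times\mathbb{F}_q^m$$ is an information set of the multiplicity code $\mathrm{Mult}^s_d$, i.e. the map $\mathrm{Mult}^s_d\to\mathbb{F}_q^{\mathcal{I}}$, $c\mapsto (c_{\mathbf{j},\mathbf{P}})_{(\mathbf{j},\mathbf{P})\in\mathcal{I}}$, is a bijection. In particular $|\mathcal{I}|=\binom{m+d}{m}$.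
   Context: For $F\in\mathbb{F}_q[X_1,\dots,X_m]$ and $\mathbf{i}\in\mathbb{N}^m$, the Hasse derivative $H(F,\mathbf{i})$ is the coefficient of $\mathbf{Z}^{\mathbf{i}}$ in $F(\mathbf{X}+\mathbf{Z})\in\mathbb{F}_q[\mathbf{X},\mathbf{Z}]$. The multiplicity code $\mathrm{Mult}^s_d$ is the set of all words $c=(c_{\mathbf{j},\mathbf{P}})_{\mathbf{j}\in S,\ \mathbf{P}\in\mathbb{F}_q^m}$ with $c_{\mathbf{j},\mathbf{P}}=H(F,\mathbf{j})(\mathbf{P})$, as $F$ ranges over polynomials in $\mathbb{F}_q[X_1,\dots,X_m]$ of total degree at most $d$; it is an $\mathbb{F}_q$-linear space. $|\mathbf{j}|$ denotes the sum of the coordinates of $\mathbf{j}$. *)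

theory Defs
  imports Main "HOL-Library.FuncSet" "HOL-Library.Cardinality"
begin

(* Multi-indices in N^m are nat lists of length m; points of F_q^m are 'a lists of length m. *)

definition degmonos :: "nat \<Rightarrow> nat \<Rightarrow> nat list set" where
  "degmonos m d = {a. length a = m \<and> sum_list a \<le> d}"

(* A polynomial of total degree \<le> d in m variables, given by its coefficient function
   (coefficient of X^a), vanishing outside the monomials of degree \<le> d. *)
definition polys :: "nat \<Rightarrow> nat \<Rightarrow> (nat list \<Rightarrow> 'a::field) set" where
  "polys m d = {c. \<forall>a. a \<notin> degmonos m d \<longrightarrow> c a = 0}"

(* Hasse derivative H(F,j) evaluated at P: coefficient of Z^j in F(X+Z), evaluated at X=P.
   For F = sum_a c_a X^a this is sum_a c_a prod_l binom(a_l,j_l) P_l^(a_l-j_l). *)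
definition hasse :: "nat \<Rightarrow> nat \<Rightarrow> (nat list \<Rightarrow> 'a::field) \<Rightarrow> nat list \<Rightarrow> 'a list \<Rightarrow> 'a" where
  "hasse m d c j P = (\<Sum>a\<in>degmonos m d. c a *
      (\<Prod>l<m. of_nat ((a ! l) choose (j ! l)) * (P ! l) ^ ((a ! l) - (j ! l))))"

definition Sidx :: "nat \<Rightarrow> nat \<Rightarrow> nat list set" where
  "Sidx m s = {j. length j = m \<and> sum_list j < s}"

definition points :: "nat \<Rightarrow> ('a::finite) list set" where
  "points m = {P. length P = m}"

definition codeword :: "nat \<Rightarrow> nat \<Rightarrow> nat \<Rightarrow> (nat list \<Rightarrow> 'a::{finite,field})
    \<Rightarrow> (nat list \<times> 'a list) \<Rightarrow> 'a" where
  "codeword m s d c = (\<lambda>(j, P). if j \<in> Sidx m s \<and> P \<in> points m then hasse m d c j P else 0)"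

definition multcode :: "nat \<Rightarrow> nat \<Rightarrow> nat \<Rightarrow> ((nat list \<times> 'a list) \<Rightarrow> 'a::{finite,field}) set" where
  "multcode m s d = codeword m s d ` polys m d"

definition dj :: "nat \<Rightarrow> nat \<Rightarrow> nat \<Rightarrow> nat list \<Rightarrow> int" where
  "dj q m d j = min (int (m * (q - 1))) (int d - int (sum_list j) * int q)"

definition Iset :: "nat \<Rightarrow> nat \<Rightarrow> (nat \<Rightarrow> 'a) \<Rightarrow> int \<Rightarrow> 'a list set" where
  "Iset q m \<alpha> e = {map \<alpha> is | is. length is = m \<and> (\<forall>i\<in>set is. i \<le> q - 1) \<and> int (sum_list is) \<le> e}"

definition infoset :: "nat \<Rightarrow> nat \<Rightarrow> nat \<Rightarrow> nat \<Rightarrow> (nat \<Rightarrow> 'a) \<Rightarrow> (nat list \<times> 'a list) set" where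
  "infoset q m s d \<alpha> = {(j, P). j \<in> Sidx m s \<and> P \<in> Iset q m \<alpha> (dj q m d j)}"

end

(* For k = q u + r with r < q let B_k(X) = (X^q - X)^u (X - \<alpha>_0) \<cdots> (X - \<alpha>_{r-1}), of degree k, and
   for a multi-index a let B_a(X) = \<Prod>_l B_{a_l}(X_l).  Writing a_l = q j_l + i_l matches the
   exponents with |a| \<le> d bijectively with the information set, a \<mapsto> (j, (\<alpha>_{i_1}, ..., \<alpha>_{i_m})).
   At b = \<alpha>_i the factor (X - b)^u of (X^q - X)^u kills the Hasse derivatives of B_k of order < u,
   and the order-u derivative is a nonzero multiple of \<Prod>_{t<r} (b - \<alpha>_t), which vanishes iff i < r.
   Hence H(B_a, j')(P') at the position of a' vanishes unless a \<le> a' componentwise, and not for a = a':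
   the matrix is triangular with nonzero diagonal.  So evaluating the span of the B_a on the information
   set is injective, hence onto by counting; since the code has at most q^|{a : |a| \<le> d}| words,
   restriction to the information set is a bijection. *)

theory Submission
  imports Defs "HOL-Computational_Algebra.Polynomial"
begin

lemma pcompose_power: "pcompose (p ^ n) r = pcompose p r ^ n"
  by (induct n) (simp_all add: pcompose_mult pcompose_1)

(* The coefficient of Z^k in p(x + Z): the univariate case of hasse. *)
lemma coeff_pcompose_shift:
  fixes p :: "'a::comm_ring_1 poly"
  assumes "degree p \<le> N"
  shows "coeff (pcompose p [:x, 1:]) k = (\<Sum>n\<le>N. coeff p n * of_nat (n choose k) * x ^ (n - k))"
proof -
  have "pcompose p [:x, 1:] = (\<Sum>n\<le>N. smult (coeff p n) ([:x, 1:] ^ n))"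
    by (subst poly_as_sum_of_monoms'[OF assms, symmetric])
       (simp add: pcompose_sum monom_altdef pcompose_smult pcompose_power pcompose_pCons)
  then have "coeff (pcompose p [:x, 1:]) k = (\<Sum>n\<le>N. coeff p n * coeff ([:x, 1:] ^ n) k)"
    by (simp add: coeff_sum)
  also have "\<dots> = (\<Sum>n\<le>N. coeff p n * of_nat (n choose k) * x ^ (n - k))"
  proof (rule sum.cong[OF refl])
    fix n
    show "coeff p n * coeff ([:x, 1:] ^ n) k = coeff p n * of_nat (n choose k) * x ^ (n - k)"
    proof (cases "k \<le> n")
      case False
      have "degree ([:x, 1:] ^ n) \<le> n"
        using degree_power_le[of "[:x, 1:]" n] by simp
      with False show ?thesis
        by (simp add: coeff_eq_0 binomial_eq_0)
    qed (simp add: coeff_linear_poly_power)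
  qed
  finally show ?thesis .
qed

definition vanishing_poly :: "'a::{finite,field} poly" where
  "vanishing_poly = (\<Prod>g\<in>UNIV. [:-g, 1:])"

definition roots_prefix_poly :: "(nat \<Rightarrow> 'a::field) \<Rightarrow> nat \<Rightarrow> 'a poly" where
  "roots_prefix_poly \<alpha> r = (\<Prod>t<r. [:-\<alpha> t, 1:])"

definition digit_poly :: "(nat \<Rightarrow> 'a::{finite,field}) \<Rightarrow> nat \<Rightarrow> 'a poly" where
  "digit_poly \<alpha> k = vanishing_poly ^ (k div CARD('a)) * roots_prefix_poly \<alpha> (k mod CARD('a))"

lemma degree_vanishing_poly: "degree (vanishing_poly :: 'a::{finite,field} poly) \<le> CARD('a)"
  unfolding vanishing_poly_def using degree_prod_sum_le[of UNIV "\<lambda>g::'a. [:-g, 1:]"] by simp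

lemma degree_roots_prefix_poly: "degree (roots_prefix_poly \<alpha> r) \<le> r"
  unfolding roots_prefix_poly_def using degree_prod_sum_le[of "{..<r}" "\<lambda>t. [:-\<alpha> t, 1:]"] by simp

lemma degree_digit_poly: "degree (digit_poly (\<alpha> :: nat \<Rightarrow> 'a::{finite,field}) k) \<le> k"
proof -
  have "degree (digit_poly \<alpha> k) \<le> degree (vanishing_poly :: 'a poly) * (k div CARD('a)) + k mod CARD('a)"
    unfolding digit_poly_def using degree_mult_le degree_power_le degree_roots_prefix_poly
    by (meson add_mono order_trans)
  also have "\<dots> \<le> CARD('a) * (k div CARD('a)) + k mod CARD('a)"
    using degree_vanishing_poly by (intro add_mono mult_le_mono1) auto
  also have "\<dots> = k" by simp
  finally show ?thesis .
qed

lemma pcompose_vanishing_poly: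
  obtains W :: "'a::{finite,field} poly"
  where "pcompose vanishing_poly [:b, 1:] = [:0, 1:] * W" and "coeff W 0 \<noteq> 0"
proof
  let ?W = "\<Prod>g\<in>UNIV - {b}. [:b - g, 1:]"
  have "pcompose vanishing_poly [:b, 1:] = (\<Prod>g\<in>UNIV. [:b - g, 1:])"
    unfolding vanishing_poly_def pcompose_prod by (simp add: pcompose_pCons)
  also have "\<dots> = [:b - b, 1:] * ?W"
    by (subst prod.remove[of UNIV b]) auto
  finally show "pcompose vanishing_poly [:b, 1:] = [:0, 1:] * ?W" by simp
  show "coeff ?W 0 \<noteq> 0"
    unfolding poly_0_coeff_0[symmetric] poly_prod by simp
qed

lemma pcompose_digit_poly:
  fixes \<alpha> :: "nat \<Rightarrow> 'a::{finite,field}"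
  obtains W where "coeff W 0 \<noteq> 0"
    and "pcompose (digit_poly \<alpha> k) [:b, 1:] = monom 1 (k div CARD('a)) *
           (W ^ (k div CARD('a)) * pcompose (roots_prefix_poly \<alpha> (k mod CARD('a))) [:b, 1:])"
proof -
  obtain W :: "'a poly" where W: "pcompose vanishing_poly [:b, 1:] = [:0, 1:] * W" "coeff W 0 \<noteq> 0"
    by (rule pcompose_vanishing_poly)
  show ?thesis
    by (rule that[OF W(2)])
       (unfold digit_poly_def pcompose_mult pcompose_power W(1) power_mult_distrib monom_altdef
         smult_1_left, simp add: mult.assoc)
qed

lemma coeff_pcompose_digit_poly_below:
  fixes \<alpha> :: "nat \<Rightarrow> 'a::{finite,field}"
  assumes "J < k div CARD('a)"
  shows "coeff (pcompose (digit_poly \<alpha> k) [:b, 1:]) J = 0"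
  by (rule pcompose_digit_poly[of \<alpha> k b]) (use assms in \<open>simp add: coeff_monom_mult\<close>)

lemma coeff_pcompose_digit_poly_eq_0_iff:
  fixes \<alpha> :: "nat \<Rightarrow> 'a::{finite,field}"
  shows "coeff (pcompose (digit_poly \<alpha> k) [:b, 1:]) (k div CARD('a)) = 0
     \<longleftrightarrow> (\<exists>t < k mod CARD('a). b = \<alpha> t)"
  by (rule pcompose_digit_poly[of \<alpha> k b])
     (simp add: coeff_monom_mult coeff_mult_0 coeff_0_power pcompose_coeff_0 roots_prefix_poly_def
       poly_prod; blast)

lemma coeff_pcompose_digit_poly_nonzero_imp_le:
  fixes \<alpha> :: "nat \<Rightarrow> 'a::{finite,field}"
  assumes nz: "coeff (pcompose (digit_poly \<alpha> k) [:\<alpha> (k' mod CARD('a)), 1:]) (k' div CARD('a)) \<noteq> 0"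
  shows "k \<le> k'"
proof (rule ccontr)
  let ?q = "CARD('a)"
  assume "\<not> k \<le> k'"
  then have "k' div ?q \<le> k div ?q" by (simp add: div_le_mono)
  moreover have "\<not> k' div ?q < k div ?q"
    using nz coeff_pcompose_digit_poly_below by blast
  ultimately have same_div: "k' div ?q = k div ?q" by simp
  have "k' = k div ?q * ?q + k' mod ?q"
    using same_div by (metis div_mult_mod_eq)
  then have "k' mod ?q < k mod ?q"
    using \<open>\<not> k \<le> k'\<close> div_mult_mod_eq[of k ?q] by linarith
  then have "coeff (pcompose (digit_poly \<alpha> k) [:\<alpha> (k' mod ?q), 1:]) (k div ?q) = 0"
    by (auto simp: coeff_pcompose_digit_poly_eq_0_iff)
  with nz same_div show False by simp
qed

lemma coeff_pcompose_digit_poly_diag: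
  fixes \<alpha> :: "nat \<Rightarrow> 'a::{finite,field}"
  assumes "inj_on \<alpha> {0..<CARD('a)}"
  shows "coeff (pcompose (digit_poly \<alpha> k) [:\<alpha> (k mod CARD('a)), 1:]) (k div CARD('a)) \<noteq> 0"
proof
  assume "coeff (pcompose (digit_poly \<alpha> k) [:\<alpha> (k mod CARD('a)), 1:]) (k div CARD('a)) = 0"
  then obtain t where t: "t < k mod CARD('a)" "\<alpha> (k mod CARD('a)) = \<alpha> t"
    by (auto simp: coeff_pcompose_digit_poly_eq_0_iff)
  moreover have "k mod CARD('a) < CARD('a)" by simp
  with t(1) have "t < CARD('a)" by linarith
  ultimately have "k mod CARD('a) = t"
    by (intro inj_onD[OF assms]) auto
  with t show False by simp
qed

lemma sum_lists_prod_nth: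
  fixes f :: "nat \<Rightarrow> nat \<Rightarrow> 'a::comm_semiring_1"
  shows "(\<Sum>b | length b = n \<and> (\<forall>l<n. b ! l \<le> u l). \<Prod>l<n. f l (b ! l)) = (\<Prod>l<n. \<Sum>k\<le>u l. f l k)"
proof -
  have "(\<Prod>l<n. \<Sum>k\<le>u l. f l k) = (\<Sum>g \<in> PiE {..<n} (\<lambda>l. {..u l}). \<Prod>l<n. f l (g l))"
    by (rule prod_sum_PiE) auto
  also have "\<dots> = (\<Sum>b | length b = n \<and> (\<forall>l<n. b ! l \<le> u l). \<Prod>l<n. f l (b ! l))"
    by (rule sum.reindex_bij_witness[where i = "\<lambda>b l. if l < n then b ! l else undefined"
          and j = "\<lambda>g. map g [0..<n]"])
       (auto simp: PiE_def extensional_def intro!: nth_equalityI)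
  finally show ?thesis ..
qed

lemma sum_list_mono_nth:
  assumes "length xs = length ys" and "\<And>l. l < length xs \<Longrightarrow> xs ! l \<le> ys ! l"
  shows "sum_list xs \<le> (sum_list ys :: nat)"
  using assms by (auto simp: sum_list_sum_nth intro!: sum_mono)

lemma sum_list_strict_mono_nth:
  assumes "length xs = length ys" and "\<And>l. l < length xs \<Longrightarrow> xs ! l \<le> ys ! l" and "xs \<noteq> ys"
  shows "sum_list xs < (sum_list ys :: nat)"
proof -
  obtain l where l: "l < length xs" "xs ! l \<noteq> ys ! l"
    using assms(1,3) nth_equalityI by blast
  with assms(2) have "xs ! l < ys ! l" by (simp add: order_less_le)
  with l(1) assms(1,2) show ?thesis
    by (auto simp: sum_list_sum_nth intro!: sum_strict_mono_ex1)
qed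

lemma finite_degmonos: "finite (degmonos m d)"
proof (rule finite_subset)
  show "degmonos m d \<subseteq> {xs. set xs \<subseteq> {..d} \<and> length xs = m}"
    using member_le_sum_list by (fastforce simp: degmonos_def)
qed (simp add: finite_lists_length_eq)

lemma card_degmonos:
  assumes "m \<ge> 1"
  shows "card (degmonos m d) = (m + d) choose m"
proof -
  have layers: "degmonos m d = (\<Union>N\<le>d. {xs. length xs = m \<and> sum_list xs = N})"
    by (auto simp: degmonos_def)
  have "finite {xs. length xs = m \<and> sum_list xs = N}" if "N \<le> d" for N
    using that by (intro finite_subset[OF _ finite_degmonos[of m d]]) (auto simp: degmonos_def)
  then have "card (degmonos m d) = (\<Sum>N\<le>d. card {xs. length xs = m \<and> sum_list xs = N})"
    unfolding layers by (intro card_UN_disjoint) auto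
  also have "\<dots> = (\<Sum>N\<le>d. (m - 1 + N) choose N)"
    using assms by (intro sum.cong refl) (simp add: card_length_sum_list add.commute)
  also have "\<dots> = Suc (m - 1 + d) choose d"
    by (rule sum_choose_lower)
  also have "\<dots> = (m + d) choose d"
    using assms by simp
  also have "\<dots> = (m + d) choose m"
    by (simp add: binomial_symmetric[of d "m + d"])
  finally show ?thesis .
qed

(* Coefficient function, as in polys, of the product over l of digit_poly \<alpha> (a ! l) in X_l. *)
definition prod_basis :: "(nat \<Rightarrow> 'a::{finite,field}) \<Rightarrow> nat \<Rightarrow> nat list \<Rightarrow> nat list \<Rightarrow> 'a" where
  "prod_basis \<alpha> m a b = (if length b = m then \<Prod>l<m. coeff (digit_poly \<alpha> (a ! l)) (b ! l) else 0)"

lemma prod_basis_eq_0: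
  assumes "l < m" and "a ! l < b ! l"
  shows "prod_basis \<alpha> m a b = 0"
proof -
  have "coeff (digit_poly \<alpha> (a ! l)) (b ! l) = 0"
    using assms(2) degree_digit_poly[of \<alpha> "a ! l"] by (intro coeff_eq_0) simp
  with assms(1) show ?thesis by (auto simp: prod_basis_def)
qed

lemma prod_basis_in_polys:
  assumes "a \<in> degmonos m d"
  shows "prod_basis \<alpha> m a \<in> polys m d"
  unfolding polys_def
proof (intro CollectI allI impI)
  fix b assume b: "b \<notin> degmonos m d"
  show "prod_basis \<alpha> m a b = 0"
  proof (cases "length b = m")
    case True
    with assms b have "\<not> sum_list b \<le> sum_list a" by (auto simp: degmonos_def)
    with True assms obtain l where "l < m" "a ! l < b ! l"
      using sum_list_mono_nth[of b a] by (force simp: degmonos_def)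
    then show ?thesis by (rule prod_basis_eq_0)
  qed (simp add: prod_basis_def)
qed

lemma hasse_prod_basis:
  fixes \<alpha> :: "nat \<Rightarrow> 'a::{finite,field}"
  assumes a: "a \<in> degmonos m d" and "length j = m" and "length P = m"
  shows "hasse m d (prod_basis \<alpha> m a) j P = (\<Prod>l<m. coeff (pcompose (digit_poly \<alpha> (a ! l)) [:P ! l, 1:]) (j ! l))"
proof -
  let ?box = "{b. length b = m \<and> (\<forall>l<m. b ! l \<le> a ! l)}"
  let ?f = "\<lambda>l k. coeff (digit_poly \<alpha> (a ! l)) k * (of_nat (k choose (j ! l)) * (P ! l) ^ (k - j ! l))"
  have "?box \<subseteq> degmonos m d"
  proof
    fix b assume "b \<in> ?box"
    with a have "length b = m" "sum_list b \<le> sum_list a" "sum_list a \<le> d"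
      by (auto simp: degmonos_def intro!: sum_list_mono_nth)
    then show "b \<in> degmonos m d" by (simp add: degmonos_def)
  qed
  have "hasse m d (prod_basis \<alpha> m a) j P = (\<Sum>b\<in>degmonos m d. \<Prod>l<m. ?f l (b ! l))"
    unfolding hasse_def
    by (rule sum.cong[OF refl]) (auto simp: prod_basis_def degmonos_def prod.distrib)
  also have "\<dots> = (\<Sum>b\<in>?box. \<Prod>l<m. ?f l (b ! l))"
  proof (rule sum.mono_neutral_right[OF finite_degmonos \<open>?box \<subseteq> degmonos m d\<close>], rule ballI)
    fix b assume "b \<in> degmonos m d - ?box"
    then obtain l where "l < m" "a ! l < b ! l" by (auto simp: degmonos_def)
    then have "prod_basis \<alpha> m a b = 0" by (rule prod_basis_eq_0)
    then show "(\<Prod>l<m. ?f l (b ! l)) = 0"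
      using \<open>b \<in> degmonos m d - ?box\<close> by (simp add: prod_basis_def degmonos_def prod.distrib)
  qed
  also have "\<dots> = (\<Prod>l<m. \<Sum>k\<le>a ! l. ?f l k)"
    by (rule sum_lists_prod_nth)
  also have "\<dots> = (\<Prod>l<m. coeff (pcompose (digit_poly \<alpha> (a ! l)) [:P ! l, 1:]) (j ! l))"
    by (intro prod.cong refl, subst coeff_pcompose_shift[OF degree_digit_poly]) (simp add: mult.assoc)
  finally show ?thesis .
qed

lemma hasse_linear_combination:
  assumes "finite A"
  shows "hasse m d (\<lambda>b. \<Sum>a\<in>A. c a * F a b) j P = (\<Sum>a\<in>A. c a * hasse m d (F a) j P)"
  unfolding hasse_def
  by (simp add: sum_distrib_left sum_distrib_right mult.assoc) (rule sum.swap)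

definition info_index :: "nat \<Rightarrow> (nat \<Rightarrow> 'b) \<Rightarrow> nat list \<Rightarrow> nat list \<times> 'b list" where
  "info_index q \<alpha> a = (map (\<lambda>x. x div q) a, map (\<lambda>x. \<alpha> (x mod q)) a)"

lemma sum_list_div_mod:
  "sum_list a = q * sum_list (map (\<lambda>x. x div q) a) + sum_list (map (\<lambda>x. x mod q) (a :: nat list))"
  by (induction a) (simp_all add: algebra_simps)

(* For digits below q the cap m (q - 1) in dj is automatic, and |j| < s follows from d < s q. *)
lemma mem_infoset_iff:
  assumes "0 < q" and "d < s * q"
  shows "(j, P) \<in> infoset q m s d \<alpha> \<longleftrightarrow> length j = m \<and>
    (\<exists>rs. P = map \<alpha> rs \<and> length rs = m \<and> (\<forall>r\<in>set rs. r < q) \<and> q * sum_list j + sum_list rs \<le> d)"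
proof -
  have digit_iff: "r \<le> q - 1 \<longleftrightarrow> r < q" for r
    using assms(1) by linarith
  have dj_iff: "int (sum_list rs) \<le> dj q m d j \<longleftrightarrow> q * sum_list j + sum_list rs \<le> d"
    if "length rs = m" and "\<forall>r\<in>set rs. r < q" for rs
  proof -
    have "sum_list rs \<le> m * (q - 1)"
      using that by (induction rs arbitrary: m) force+
    then show ?thesis
      by (simp add: dj_def algebra_simps flip: of_nat_mult of_nat_add)
  qed
  have "sum_list j < s" if "q * sum_list j \<le> d"
    using that assms(2) by (metis le_less_trans mult.commute mult_less_cancel1)
  then show ?thesis
    unfolding infoset_def Iset_def Sidx_def using dj_iff digit_iff by auto
qed

lemma infoset_eq_image_info_index:
  assumes "0 < q" and "d < s * q"
  shows "infoset q m s d \<alpha> = info_index q \<alpha> ` degmonos m d"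
proof (intro equalityI subsetI)
  fix x assume "x \<in> info_index q \<alpha> ` degmonos m d"
  then obtain a where a: "a \<in> degmonos m d" and x: "x = info_index q \<alpha> a" by blast
  let ?rs = "map (\<lambda>x. x mod q) a"
  have "\<forall>r\<in>set ?rs. r < q" using assms(1) by auto
  moreover have "q * sum_list (map (\<lambda>x. x div q) a) + sum_list ?rs \<le> d"
    using a sum_list_div_mod[of a q] by (simp add: degmonos_def)
  ultimately show "x \<in> infoset q m s d \<alpha>"
    using a unfolding x info_index_def mem_infoset_iff[OF assms]
    by (auto simp: degmonos_def intro!: exI[of _ ?rs])
next
  fix x assume "x \<in> infoset q m s d \<alpha>"
  moreover obtain j P where x: "x = (j, P)" by force
  ultimately obtain rs where j: "length j = m" and rs: "P = map \<alpha> rs" "length rs = m"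
    "\<forall>r\<in>set rs. r < q" "q * sum_list j + sum_list rs \<le> d"
    using mem_infoset_iff[OF assms] by blast
  define a where "a = map2 (\<lambda>y r. q * y + r) j rs"
  have "rs ! i < q" if "i < m" for i
    using rs(2,3) that by auto
  then have digits: "map (\<lambda>x. x div q) a = j" "map (\<lambda>x. x mod q) a = rs"
    using assms(1) j rs(2) by (auto simp: a_def intro!: nth_equalityI)
  then have "a \<in> degmonos m d"
    using j rs(4) sum_list_div_mod[of a q] by (auto simp: degmonos_def dest: arg_cong[of _ _ length])
  moreover have "info_index q \<alpha> a = x"
    unfolding info_index_def x rs(1) by (simp add: digits(1) flip: digits(2))
  ultimately show "x \<in> info_index q \<alpha> ` degmonos m d" by blast
qed

lemma inj_info_index:
  assumes "0 < q" and "inj_on \<alpha> {0..<q}"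
  shows "inj (info_index q \<alpha>)"
proof (rule injI)
  fix a b assume "info_index q \<alpha> a = info_index q \<alpha> b"
  then have div: "map (\<lambda>x. x div q) a = map (\<lambda>x. x div q) b"
    and res: "map (\<lambda>x. \<alpha> (x mod q)) a = map (\<lambda>x. \<alpha> (x mod q)) b"
    by (simp_all add: info_index_def)
  from div have len: "length a = length b" by (metis length_map)
  show "a = b"
  proof (rule nth_equalityI[OF len])
    fix i assume "i < length a"
    with div res len have "a ! i div q = b ! i div q" "\<alpha> (a ! i mod q) = \<alpha> (b ! i mod q)"
      by (metis nth_map)+
    moreover from this(2) have "a ! i mod q = b ! i mod q"
      using assms by (auto dest: inj_onD)
    ultimately show "a ! i = b ! i" by (metis div_mult_mod_eq)
  qed
qed

lemma finite_infoset:
  assumes "0 < q" and "d < s * q"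
  shows "finite (infoset q m s d \<alpha>)"
  by (simp add: infoset_eq_image_info_index[OF assms] finite_degmonos)

lemma card_infoset:
  assumes "0 < q" and "d < s * q" and "inj_on \<alpha> {0..<q}"
  shows "card (infoset q m s d \<alpha>) = card (degmonos m d)"
  using card_image[OF inj_on_subset[OF inj_info_index[OF assms(1,3)] subset_UNIV]]
  by (simp add: infoset_eq_image_info_index[OF assms(1,2)])

lemma triangular_kernel_eq_0:
  fixes E :: "'b \<Rightarrow> 'b \<Rightarrow> 'a::semiring_no_zero_divisors" and \<mu> :: "'b \<Rightarrow> nat"
  assumes "finite A"
    and triangular: "\<And>a b. a \<in> A \<Longrightarrow> b \<in> A \<Longrightarrow> E a b \<noteq> 0 \<Longrightarrow> b = a \<or> \<mu> b < \<mu> a"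
    and diag: "\<And>a. a \<in> A \<Longrightarrow> E a a \<noteq> 0"
    and kernel: "\<And>a. a \<in> A \<Longrightarrow> (\<Sum>b\<in>A. g b * E a b) = 0"
    and "a \<in> A"
  shows "g a = 0"
  using \<open>a \<in> A\<close>
proof (induction "\<mu> a" arbitrary: a rule: less_induct)
  case less
  have "(\<Sum>b\<in>A - {a}. g b * E a b) = 0"
  proof (rule sum.neutral, rule ballI)
    fix b assume b: "b \<in> A - {a}"
    show "g b * E a b = 0"
    proof (cases "E a b = 0")
      case False
      with triangular less.prems b have "\<mu> b < \<mu> a" by auto
      with less.hyps b show ?thesis by simp
    qed simp
  qed
  moreover have "(\<Sum>b\<in>A. g b * E a b) = g a * E a a + (\<Sum>b\<in>A - {a}. g b * E a b)"
    using \<open>finite A\<close> less.prems by (rule sum.remove)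
  ultimately have "g a * E a a = 0"
    using kernel less.prems by simp
  with diag less.prems show ?case by simp
qed

definition basis_matrix :: "(nat \<Rightarrow> 'a::{finite,field}) \<Rightarrow> nat \<Rightarrow> nat \<Rightarrow> nat list \<Rightarrow> nat list \<Rightarrow> 'a" where
  "basis_matrix \<alpha> m d a' a = (case info_index CARD('a) \<alpha> a' of (j, P) \<Rightarrow> hasse m d (prod_basis \<alpha> m a) j P)"

lemma basis_matrix_eq:
  fixes \<alpha> :: "nat \<Rightarrow> 'a::{finite,field}"
  assumes "a \<in> degmonos m d" and "a' \<in> degmonos m d"
  shows "basis_matrix \<alpha> m d a' a =
    (\<Prod>l<m. coeff (pcompose (digit_poly \<alpha> (a ! l)) [:\<alpha> (a' ! l mod CARD('a)), 1:]) (a' ! l div CARD('a)))"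
  using assms by (simp add: basis_matrix_def info_index_def hasse_prod_basis degmonos_def)

lemma basis_matrix_triangular:
  fixes \<alpha> :: "nat \<Rightarrow> 'a::{finite,field}"
  assumes "a \<in> degmonos m d" and "a' \<in> degmonos m d" and "basis_matrix \<alpha> m d a' a \<noteq> 0"
  shows "a = a' \<or> sum_list a < sum_list a'"
proof -
  have "a ! l \<le> a' ! l" if "l < m" for l
    using assms that coeff_pcompose_digit_poly_nonzero_imp_le[of \<alpha> "a ! l" "a' ! l"]
    by (simp add: basis_matrix_eq)
  with assms(1,2) show ?thesis
    using sum_list_strict_mono_nth[of a a'] by (auto simp: degmonos_def)
qed

lemma basis_matrix_diag:
  assumes "inj_on \<alpha> {0..<CARD('a)}" and "a \<in> degmonos m d"
  shows "basis_matrix (\<alpha> :: nat \<Rightarrow> 'a::{finite,field}) m d a a \<noteq> 0"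
  using assms by (simp add: basis_matrix_eq coeff_pcompose_digit_poly_diag)

definition basis_comb :: "(nat \<Rightarrow> 'a::{finite,field}) \<Rightarrow> nat \<Rightarrow> nat \<Rightarrow> (nat list \<Rightarrow> 'a) \<Rightarrow> nat list \<Rightarrow> 'a" where
  "basis_comb \<alpha> m d c = (\<lambda>b. \<Sum>a\<in>degmonos m d. c a * prod_basis \<alpha> m a b)"

lemma basis_comb_in_polys: "basis_comb \<alpha> m d c \<in> polys m d"
  using prod_basis_in_polys[of _ m d \<alpha>] by (simp add: basis_comb_def polys_def)

lemma codeword_on_infoset:
  assumes "(j, P) \<in> infoset q m s d \<alpha>"
  shows "codeword m s d F (j, P) = hasse m d F j P"
  using assms by (auto simp: infoset_def Iset_def points_def codeword_def)

lemma inj_on_restrict_codeword_basis_comb: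
  fixes \<alpha> :: "nat \<Rightarrow> 'a::{finite,field}"
  assumes inj: "inj_on \<alpha> {0..<CARD('a)}" and d: "d < s * CARD('a)"
  shows "inj_on (\<lambda>c. restrict (codeword m s d (basis_comb \<alpha> m d c)) (infoset CARD('a) m s d \<alpha>))
    (degmonos m d \<rightarrow>\<^sub>E UNIV)"
proof (rule inj_onI)
  fix c c'
  assume c: "c \<in> degmonos m d \<rightarrow>\<^sub>E UNIV" and c': "c' \<in> degmonos m d \<rightarrow>\<^sub>E UNIV"
    and eq: "restrict (codeword m s d (basis_comb \<alpha> m d c)) (infoset CARD('a) m s d \<alpha>) =
             restrict (codeword m s d (basis_comb \<alpha> m d c')) (infoset CARD('a) m s d \<alpha>)"
  have kernel: "(\<Sum>a\<in>degmonos m d. (c a - c' a) * basis_matrix \<alpha> m d a' a) = 0"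
    if "a' \<in> degmonos m d" for a'
  proof -
    obtain j P where jP: "info_index CARD('a) \<alpha> a' = (j, P)" by force
    with that have "(j, P) \<in> infoset CARD('a) m s d \<alpha>"
      by (auto simp: infoset_eq_image_info_index[OF _ d] intro!: image_eqI)
    with eq have "hasse m d (basis_comb \<alpha> m d c) j P = hasse m d (basis_comb \<alpha> m d c') j P"
      by (metis codeword_on_infoset restrict_apply')
    then show ?thesis
      unfolding basis_comb_def hasse_linear_combination[OF finite_degmonos] basis_matrix_def jP
      by (simp add: left_diff_distrib sum_subtractf)
  qed
  have "c a - c' a = 0" if "a \<in> degmonos m d" for a
    using finite_degmonos basis_matrix_triangular basis_matrix_diag[OF inj] kernel that
    by (rule triangular_kernel_eq_0[where \<mu> = sum_list]) auto
  with c c' show "c = c'"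
    by (intro PiE_ext) auto
qed

lemma restrict_multcode_eq_PiE:
  fixes \<alpha> :: "nat \<Rightarrow> 'a::{finite,field}"
  assumes inj: "inj_on \<alpha> {0..<CARD('a)}" and d: "d < s * CARD('a)"
  shows "(\<lambda>w. restrict w (infoset CARD('a) m s d \<alpha>)) ` multcode m s d
    = infoset CARD('a) m s d \<alpha> \<rightarrow>\<^sub>E (UNIV :: 'a set)"
proof
  let ?I = "infoset CARD('a) m s d \<alpha>"
  let ?eval = "\<lambda>c. restrict (codeword m s d (basis_comb \<alpha> m d c)) ?I"
  have "finite ?I"
    using d by (intro finite_infoset) simp_all
  then have "?eval ` (degmonos m d \<rightarrow>\<^sub>E UNIV) = ?I \<rightarrow>\<^sub>E UNIV"
    by (intro card_subset_eq)
      (auto simp: finite_PiE card_PiE finite_degmonos card_infoset[OF _ d inj]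
        card_image[OF inj_on_restrict_codeword_basis_comb[OF inj d]])
  moreover have "?eval ` (degmonos m d \<rightarrow>\<^sub>E UNIV) \<subseteq> (\<lambda>w. restrict w ?I) ` multcode m s d"
    unfolding multcode_def using basis_comb_in_polys by (auto intro!: imageI)
  ultimately show "?I \<rightarrow>\<^sub>E UNIV \<subseteq> (\<lambda>w. restrict w ?I) ` multcode m s d"
    by simp
qed auto

lemma bij_betw_restrict_polys:
  "bij_betw (\<lambda>c. restrict c (degmonos m d)) (polys m d) (degmonos m d \<rightarrow>\<^sub>E (UNIV :: 'a::field set))"
  by (rule bij_betw_byWitness[where f' = "\<lambda>g b. if b \<in> degmonos m d then g b else 0"])
     (auto simp: polys_def fun_eq_iff)

lemma finite_polys: "finite (polys m d :: (nat list \<Rightarrow> 'a::{finite,field}) set)"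
  using bij_betw_finite[OF bij_betw_restrict_polys[where 'a = 'a]]
  by (simp add: finite_PiE finite_degmonos)

lemma finite_multcode: "finite (multcode m s d :: ((nat list \<times> 'a list) \<Rightarrow> 'a::{finite,field}) set)"
  by (simp add: multcode_def finite_polys)

lemma card_multcode_le:
  "card (multcode m s d :: ((nat list \<times> 'a list) \<Rightarrow> 'a::{finite,field}) set) \<le> CARD('a) ^ card (degmonos m d)"
proof -
  have "card (multcode m s d :: ((nat list \<times> 'a list) \<Rightarrow> 'a) set) \<le> card (polys m d :: (nat list \<Rightarrow> 'a) set)"
    unfolding multcode_def using finite_polys by (rule card_image_le)
  also have "\<dots> = CARD('a) ^ card (degmonos m d)"
    using bij_betw_same_card[OF bij_betw_restrict_polys[where 'a = 'a]]
    by (simp add: card_PiE finite_degmonos)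
  finally show ?thesis .
qed

theorem mainTheorem6:
  fixes \<alpha> :: "nat \<Rightarrow> 'a::{finite,field}"
    and m s d :: nat
  assumes "m \<ge> 1" and "s \<ge> 1" and "d < s * CARD('a)"
    and "bij_betw \<alpha> {0..<CARD('a)} (UNIV :: 'a set)"
  shows "bij_betw (\<lambda>w. restrict w (infoset CARD('a) m s d \<alpha>)) (multcode m s d)
           (infoset CARD('a) m s d \<alpha> \<rightarrow>\<^sub>E (UNIV :: 'a set))
         \<and> card (infoset CARD('a) m s d \<alpha>) = (m + d) choose m"
proof -
  let ?I = "infoset CARD('a) m s d \<alpha>"
  let ?C = "multcode m s d :: ((nat list \<times> 'a list) \<Rightarrow> 'a) set"
  let ?restrict = "\<lambda>w. restrict w ?I"
  have inj: "inj_on \<alpha> {0..<CARD('a)}"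
    using assms(4) by (rule bij_betw_imp_inj_on)
  have card_I: "card ?I = card (degmonos m d)"
    using assms(3) inj by (intro card_infoset) simp_all
  have onto: "?restrict ` ?C = ?I \<rightarrow>\<^sub>E UNIV"
    using inj assms(3) by (rule restrict_multcode_eq_PiE)
  have "card (?I \<rightarrow>\<^sub>E (UNIV :: 'a set)) = CARD('a) ^ card (degmonos m d)"
    using assms(3) card_I by (simp add: card_PiE finite_infoset)
  with card_multcode_le onto have "card ?C \<le> card (?restrict ` ?C)"
    by metis
  moreover have "finite ?C"
    by (rule finite_multcode)
  ultimately have "inj_on ?restrict ?C"
    by (intro eq_card_imp_inj_on) (simp_all add: antisym card_image_le)
  with onto card_I card_degmonos[OF assms(1)] show ?thesis
    by (simp add: bij_betw_def)
qed

end
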